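(* Fix $(\varepsilon,\delta)\in(0,1)\times(0,\delta_0]$ and suppose $(R_1,R_2)\in\mathcal S^\ast(\varepsilon,\delta|p_{X_1X_2},p_{K_1K_2})$. Then for every $\gamma>0$ there exists $n_0=n_0(\gamma)$ such that for all $n\ge n_0$, $$R_i\le H(K_i)+2\gamma+\zeta_n(\gamma,\varepsilon,\delta),\quad i=1,2.$$
   Context: All logarithms are base 2. $\mathcal X_1,\mathcal X_2$ are finite fields. $(X_1,X_2)$ has joint pmf $p_{X_1X_2}$ on $\mathcal X_1\times\mathcal X_2$ and $(K_1,K_2)$ has joint pmf $p_{K_1K_2}$ on $\mathcal X_1\times\mathcal X_2$. For block length $n$, $(\mathbf X_1,\mathbf X_2)$ is i.i.d. with law $p^n_{X_1X_2}$ (source), $(\mathbf K_1,\mathbf K_2)$ is i.i.d. with law $p^n_{K_1K_2}$ (keys), and the keys are independent of the sources. A distributed source encryption system at block length $n$ consists of finite sets $\mathcal C_i^{(n)}$, encryption maps $\Phi_i^{(n)}:\mathcal X_i^n\times\mathcal X_i^n\to\mathcal C_i^{(n)}$ (key, plaintext) and a decryption map $\Psi^{(n)}:\mathcal X_1^n\times\mathcal X_2^n\times\mathcal C_1^{(n)}\times\mathcal C_2^{(n)}\to\mathcal X_1^n\times\mathcal X_2^n$, such that there exist maps $\phi_i^{(n)}:\mathcal X_i^n\to\mathcal M_i^{(n)}$ (finite $\mathcal M_i^{(n)}$) and $\psi^{(n)}$ with $\Psi^{(n)}(\mathbf k_1,\mathbf k_2,\Phi_1^{(n)}(\mathbf k_1,\mathbf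 x_1),\Phi_2^{(n)}(\mathbf k_2,\mathbf x_2))=\psi^{(n)}(\phi_1^{(n)}(\mathbf x_1),\phi_2^{(n)}(\mathbf x_2))$ for all keys and plaintexts. Ciphertexts: $C_i^{(n)}=\Phi_i^{(n)}(\mathbf K_i,\mathbf X_i)$. Correct decoding set $\mathcal D^{(n)}:=\{(\mathbf x_1,\mathbf x_2):\psi^{(n)}(\phi_1^{(n)}(\mathbf x_1),\phi_2^{(n)}(\mathbf x_2))=(\mathbf x_1,\mathbf x_2)\}$; error probability $p_{\rm e}:=\Pr[(\mathbf X_1,\mathbf X_2)\notin\mathcal D^{(n)}]$. Fix a constant $\delta_0>0$. For $(\varepsilon,\delta)\in(0,1)\times[0,\delta_0]$, $(R_1,R_2)$ is an $(\varepsilon,\delta)$-reliable and secure rate pair if there is a sequence of systems $\{(\Phi_1^{(n)},\Phi_2^{(n)},\Psi^{(n)})\}_{n\ge1}$ such that for every $\gamma>0$ there is $n_0$ with, for all $n\ge n_0$: $\frac1n\log|\mathcal C_i^{(n)}|\le R_i+\gamma$ ($i=1,2$), $p_{\rm e}\le\varepsilon$, and $I(C_1^{(n)}C_2^{(n)};\mathbf X_1\mathbf X_2)\le\delta$. $\mathcal R^\ast(\varepsilon,\delta|p_{X_1X_2},p_{K_1K_2})$ is the set of such pairs and $\mathcal S^\ast(\varepsilon,\delta|p_{X_1X_2},p_{K_1K_2}):=\mathcal R^\ast(\varepsilon,\delta|p_{X_1X_2},p_{K_1K_2})\cap\{(R_1,R_2):R_1+R_2=H(X_1X_2)\}$. For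 $\gamma>0$ let $\tilde{\mathcal A}^{(n)}_\gamma$ be the set of $(\mathbf x_1,\mathbf x_2)\in\mathcal X_1^n\times\mathcal X_2^n$ with $\bigl|\frac1n\log\frac1{p^n_{X_i|X_{3-i}}(\mathbf x_i|\mathbf x_{3-i})}-H(X_i|X_{3-i})\bigr|\le\gamma$ for $i=1,2$ and $\bigl|\frac1n\log\frac1{p^n_{X_1X_2}(\mathbf x_1,\mathbf x_2)}-H(X_1X_2)\bigr|\le\gamma$. Set $\nu_n(\gamma):=p^n_{X_1X_2}((\tilde{\mathcal A}^{(n)}_\gamma)^c)$, $\nu_n(\gamma,\varepsilon):=\nu_n(\gamma)+\varepsilon$, and $\zeta_n(\gamma,\varepsilon,\delta):=\frac1n\Bigl[\frac{\delta}{1-\nu_n(\gamma,\varepsilon)}+\log\frac1{1-\nu_n(\gamma,\varepsilon)}\Bigr]$. *)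

theory Defs
  imports "HOL-Probability.Probability"
begin

definition ent :: "'u pmf \<Rightarrow> real" where
  "ent p = (\<Sum>x\<in>set_pmf p. - pmf p x * log 2 (pmf p x))"

definition cond_ent :: "('u \<times> 'v) pmf \<Rightarrow> real" where
  "cond_ent q = (\<Sum>z\<in>set_pmf q.
      - pmf q z * log 2 (pmf q z / pmf (map_pmf snd q) (snd z)))"

definition mutual_info :: "('u \<times> 'v) pmf \<Rightarrow> real" where
  "mutual_info q = (\<Sum>z\<in>set_pmf q.
      pmf q z * log 2 (pmf q z / (pmf (map_pmf fst q) (fst z) * pmf (map_pmf snd q) (snd z))))"

definition swap_pmf :: "('u \<times> 'v) pmf \<Rightarrow> ('v \<times> 'u) pmf" where
  "swap_pmf q = map_pmf (\<lambda>(u, v). (v, u)) q"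

fun iid_pmf :: "nat \<Rightarrow> 'u pmf \<Rightarrow> 'u list pmf" where
  "iid_pmf 0 p = return_pmf []"
| "iid_pmf (Suc n) p = bind_pmf p (\<lambda>x. map_pmf (\<lambda>xs. x # xs) (iid_pmf n p))"

definition block_pmf :: "nat \<Rightarrow> ('a \<times> 'b) pmf \<Rightarrow> ('a list \<times> 'b list) pmf" where
  "block_pmf n p = map_pmf (\<lambda>zs. (map fst zs, map snd zs)) (iid_pmf n p)"

definition block_cond :: "('u \<times> 'v) pmf \<Rightarrow> 'u list \<Rightarrow> 'v list \<Rightarrow> real" where
  "block_cond q us vs = (\<Prod>(u, v)\<leftarrow>zip us vs. pmf q (u, v) / pmf (map_pmf snd q) v)"

definition block_joint :: "('u \<times> 'v) pmf \<Rightarrow> 'u list \<Rightarrow> 'v list \<Rightarrow> real" where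
  "block_joint q us vs = (\<Prod>(u, v)\<leftarrow>zip us vs. pmf q (u, v))"

definition typ_set :: "('a \<times> 'b) pmf \<Rightarrow> nat \<Rightarrow> real \<Rightarrow> ('a list \<times> 'b list) set" where
  "typ_set p n \<gamma> = {(x1, x2). length x1 = n \<and> length x2 = n \<and>
      \<bar>(1 / real n) * log 2 (1 / block_cond p x1 x2) - cond_ent p\<bar> \<le> \<gamma> \<and>
      \<bar>(1 / real n) * log 2 (1 / block_cond (swap_pmf p) x2 x1) - cond_ent (swap_pmf p)\<bar> \<le> \<gamma> \<and>
      \<bar>(1 / real n) * log 2 (1 / block_joint p x1 x2) - ent p\<bar> \<le> \<gamma>}"

definition nu :: "('a \<times> 'b) pmf \<Rightarrow> nat \<Rightarrow> real \<Rightarrow> real" where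
  "nu p n \<gamma> = measure_pmf.prob (block_pmf n p) (- typ_set p n \<gamma>)"

definition nu_eps :: "('a \<times> 'b) pmf \<Rightarrow> nat \<Rightarrow> real \<Rightarrow> real \<Rightarrow> real" where
  "nu_eps p n \<gamma> \<epsilon> = nu p n \<gamma> + \<epsilon>"

definition zeta :: "('a \<times> 'b) pmf \<Rightarrow> nat \<Rightarrow> real \<Rightarrow> real \<Rightarrow> real \<Rightarrow> real" where
  "zeta p n \<gamma> \<epsilon> \<delta> = (1 / real n) *
     (\<delta> / (1 - nu_eps p n \<gamma> \<epsilon>) + log 2 (1 / (1 - nu_eps p n \<gamma> \<epsilon>)))"

text \<open>A system at block length n. Ciphertext sets C_i and message sets M_i are
  (w.l.o.g.) finite sets of natural numbers. Phi_i takes (key, plaintext).\<close>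
definition is_system ::
  "nat \<Rightarrow> ('a list \<Rightarrow> 'a list \<Rightarrow> nat) \<Rightarrow> ('b list \<Rightarrow> 'b list \<Rightarrow> nat)
   \<Rightarrow> ('a list \<Rightarrow> 'b list \<Rightarrow> nat \<Rightarrow> nat \<Rightarrow> 'a list \<times> 'b list)
   \<Rightarrow> nat set \<Rightarrow> nat set
   \<Rightarrow> ('a list \<Rightarrow> nat) \<Rightarrow> ('b list \<Rightarrow> nat) \<Rightarrow> (nat \<Rightarrow> nat \<Rightarrow> 'a list \<times> 'b list)
   \<Rightarrow> nat set \<Rightarrow> nat set \<Rightarrow> bool" where
  "is_system n \<Phi>1 \<Phi>2 \<Psi> C1 C2 \<phi>1 \<phi>2 \<psi> M1 M2 \<longleftrightarrow>
     finite C1 \<and> finite C2 \<and> finite M1 \<and> finite M2 \<and>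
     (\<forall>k x. length k = n \<and> length x = n \<longrightarrow> \<Phi>1 k x \<in> C1) \<and>
     (\<forall>k x. length k = n \<and> length x = n \<longrightarrow> \<Phi>2 k x \<in> C2) \<and>
     (\<forall>x. length x = n \<longrightarrow> \<phi>1 x \<in> M1) \<and>
     (\<forall>x. length x = n \<longrightarrow> \<phi>2 x \<in> M2) \<and>
     (\<forall>k1 k2 x1 x2. length k1 = n \<and> length k2 = n \<and> length x1 = n \<and> length x2 = n \<longrightarrow>
        \<Psi> k1 k2 (\<Phi>1 k1 x1) (\<Phi>2 k2 x2) = \<psi> (\<phi>1 x1) (\<phi>2 x2))"

definition dec_set :: "nat \<Rightarrow> ('a list \<Rightarrow> nat) \<Rightarrow> ('b list \<Rightarrow> nat)
   \<Rightarrow> (nat \<Rightarrow> nat \<Rightarrow> 'a list \<times> 'b list) \<Rightarrow> ('a list \<times> 'b list) set" where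
  "dec_set n \<phi>1 \<phi>2 \<psi> = {(x1, x2). length x1 = n \<and> length x2 = n \<and> \<psi> (\<phi>1 x1) (\<phi>2 x2) = (x1, x2)}"

definition cipher_source_pmf ::
  "nat \<Rightarrow> ('a \<times> 'b) pmf \<Rightarrow> ('a \<times> 'b) pmf \<Rightarrow> ('a list \<Rightarrow> 'a list \<Rightarrow> nat) \<Rightarrow> ('b list \<Rightarrow> 'b list \<Rightarrow> nat)
   \<Rightarrow> ((nat \<times> nat) \<times> ('a list \<times> 'b list)) pmf" where
  "cipher_source_pmf n pX pK \<Phi>1 \<Phi>2 =
     map_pmf (\<lambda>((k1, k2), (x1, x2)). ((\<Phi>1 k1 x1, \<Phi>2 k2 x2), (x1, x2)))
       (pair_pmf (block_pmf n pK) (block_pmf n pX))"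

definition R_star :: "real \<Rightarrow> real \<Rightarrow> ('a::{finite,field} \<times> 'b::{finite,field}) pmf
    \<Rightarrow> ('a \<times> 'b) pmf \<Rightarrow> (real \<times> real) set" where
  "R_star \<epsilon> \<delta> pX pK = {(R1, R2).
     \<exists>(\<Phi>1 :: nat \<Rightarrow> 'a list \<Rightarrow> 'a list \<Rightarrow> nat) (\<Phi>2 :: nat \<Rightarrow> 'b list \<Rightarrow> 'b list \<Rightarrow> nat)
      (\<Psi> :: nat \<Rightarrow> 'a list \<Rightarrow> 'b list \<Rightarrow> nat \<Rightarrow> nat \<Rightarrow> 'a list \<times> 'b list)
      (C1 :: nat \<Rightarrow> nat set) (C2 :: nat \<Rightarrow> nat set)
      (\<phi>1 :: nat \<Rightarrow> 'a list \<Rightarrow> nat) (\<phi>2 :: nat \<Rightarrow> 'b list \<Rightarrow> nat)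
      (\<psi> :: nat \<Rightarrow> nat \<Rightarrow> nat \<Rightarrow> 'a list \<times> 'b list)
      (M1 :: nat \<Rightarrow> nat set) (M2 :: nat \<Rightarrow> nat set).
       (\<forall>n\<ge>1. is_system n (\<Phi>1 n) (\<Phi>2 n) (\<Psi> n) (C1 n) (C2 n) (\<phi>1 n) (\<phi>2 n) (\<psi> n) (M1 n) (M2 n)) \<and>
       (\<forall>\<gamma>>0. \<exists>n0. \<forall>n\<ge>n0. n \<ge> 1 \<longrightarrow>
          (1 / real n) * log 2 (real (card (C1 n))) \<le> R1 + \<gamma> \<and>
          (1 / real n) * log 2 (real (card (C2 n))) \<le> R2 + \<gamma> \<and>
          measure_pmf.prob (block_pmf n pX) (- dec_set n (\<phi>1 n) (\<phi>2 n) (\<psi> n)) \<le> \<epsilon> \<and>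
          mutual_info (cipher_source_pmf n pX pK (\<Phi>1 n) (\<Phi>2 n)) \<le> \<delta>)}"

definition S_star :: "real \<Rightarrow> real \<Rightarrow> ('a::{finite,field} \<times> 'b::{finite,field}) pmf
    \<Rightarrow> ('a \<times> 'b) pmf \<Rightarrow> (real \<times> real) set" where
  "S_star \<epsilon> \<delta> pX pK = R_star \<epsilon> \<delta> pX pK \<inter> {(R1, R2). R1 + R2 = ent pX}"

end

(*
  Fix gamma and let A be the set of correctly decoded, typical source blocks; Chebyshev's
  inequality for the i.i.d. log-likelihoods gives nu_n(gamma) -> 0, so eventually
  Pr(A) >= 1 - nu_n(gamma) - epsilon > 0, and every block in A has probability at most
  2^(-n (H(X1 X2) - gamma)). For each key the encryption map is injective on A, so the
  log-sum inequality bounds the share of the source entropy carried by A by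
  Pr(A) log(1/Pr(A)) + I(C; X) + Pr(A) max_x H(C | X = x). Given the plaintext, C1 is a
  function of K1 alone, hence H(C | X = x) <= n H(K1) + log |C2|. Dividing by n Pr(A) gives
  H(X1 X2) <= (1/n) log |C2| + H(K1) + gamma + zeta_n, and R1 + R2 = H(X1 X2) together with
  (1/n) log |C2| <= R2 + gamma yields the bound on R1; the bound on R2 is symmetric.
*)

theory Submission
  imports Defs
begin

section \<open>Expectations over finitely supported pmfs\<close>

(* A plain sum over the support, so no integrability side conditions arise. *)
definition expect :: "'a pmf \<Rightarrow> ('a \<Rightarrow> real) \<Rightarrow> real" where
  "expect p f = (\<Sum>x\<in>set_pmf p. pmf p x * f x)"

lemma expect_eq_integral:
  "finite (set_pmf p) \<Longrightarrow> expect p f = measure_pmf.expectation p f"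
  unfolding expect_def
  by (subst integral_measure_pmf_real[where A = "set_pmf p"]) (auto simp: mult.commute)

lemma expect_map_pmf: "finite (set_pmf p) \<Longrightarrow> expect (map_pmf g p) f = expect p (\<lambda>x. f (g x))"
  by (simp add: expect_eq_integral)

lemma expect_pair_pmf:
  "finite (set_pmf p) \<Longrightarrow> finite (set_pmf q) \<Longrightarrow>
   expect (pair_pmf p q) f = expect p (\<lambda>a. expect q (\<lambda>b. f (a, b)))"
  unfolding expect_def
  by (simp add: sum.cartesian_product sum_distrib_left case_prod_unfold)
     (rule sum.cong, auto simp: pmf_pair)

lemma expect_commute: "expect p (\<lambda>a. expect q (\<lambda>b. h a b)) = expect q (\<lambda>b. expect p (\<lambda>a. h a b))"
  unfolding expect_def by (simp add: sum_distrib_left mult.left_commute sum.swap[of _ "set_pmf p"])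

lemma expect_return_pmf: "expect (return_pmf x) f = f x"
  unfolding expect_def by simp

lemma expect_add: "expect p (\<lambda>x. f x + g x) = expect p f + expect p g"
  unfolding expect_def by (simp add: distrib_left sum.distrib)

lemma expect_diff: "expect p (\<lambda>x. f x - g x) = expect p f - expect p g"
  unfolding expect_def by (simp add: right_diff_distrib sum_subtractf)

lemma expect_cmult: "expect p (\<lambda>x. c * f x) = c * expect p f"
  unfolding expect_def by (simp add: sum_distrib_left mult.left_commute)

lemma expect_const: "finite (set_pmf p) \<Longrightarrow> expect p (\<lambda>x. c) = c"
  unfolding expect_def by (simp add: sum_distrib_right[symmetric] sum_pmf_eq_1)

lemma expect_mono: "(\<And>x. x \<in> set_pmf p \<Longrightarrow> f x \<le> g x) \<Longrightarrow> expect p f \<le> expect p g"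
  unfolding expect_def by (intro sum_mono mult_left_mono) auto

lemma expect_cong: "(\<And>x. x \<in> set_pmf p \<Longrightarrow> f x = g x) \<Longrightarrow> expect p f = expect p g"
  unfolding expect_def by (intro sum.cong) auto

lemma measure_pmf_eq_sum:
  "finite (set_pmf p) \<Longrightarrow> measure_pmf.prob p B = (\<Sum>x\<in>set_pmf p \<inter> B. pmf p x)"
  by (metis Int_commute finite_Int measure_Int_set_pmf measure_measure_pmf_finite)

lemma markov_inequality_expect:
  assumes "finite (set_pmf p)" and "t > 0" and "\<And>x. x \<in> set_pmf p \<Longrightarrow> 0 \<le> f x"
  shows "measure_pmf.prob p {x. t \<le> f x} \<le> expect p f / t"
proof -
  have "measure_pmf.prob p {x. t \<le> f x} = (\<Sum>x\<in>set_pmf p \<inter> {x. t \<le> f x}. pmf p x)"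
    using assms(1) by (rule measure_pmf_eq_sum)
  also have "\<dots> \<le> (\<Sum>x\<in>set_pmf p \<inter> {x. t \<le> f x}. pmf p x * (f x / t))"
    using assms(2) by (intro sum_mono) (auto intro!: mult_right_mono simp: field_simps)
  also have "\<dots> \<le> (\<Sum>x\<in>set_pmf p. pmf p x * (f x / t))"
    using assms by (intro sum_mono2) auto
  also have "\<dots> = expect p f / t"
    unfolding expect_def by (simp add: sum_divide_distrib)
  finally show ?thesis .
qed

section \<open>I.i.d. blocks\<close>

lemma iid_pmf_Suc_pair: "iid_pmf (Suc n) p = map_pmf (\<lambda>(x, xs). x # xs) (pair_pmf p (iid_pmf n p))"
  by (simp add: pair_pmf_def map_bind_pmf map_pmf_def[symmetric] map_pmf_comp)

lemma set_pmf_iid_pmf: "set_pmf (iid_pmf n p) = {zs. length zs = n \<and> set zs \<subseteq> set_pmf p}"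
proof (induction n)
  case 0
  then show ?case by auto
next
  case (Suc n)
  show ?case
    unfolding iid_pmf_Suc_pair Suc set_map_pmf set_pair_pmf
    by (auto simp: length_Suc_conv image_iff)
qed

lemma finite_set_pmf_iid_pmf: "finite (set_pmf p) \<Longrightarrow> finite (set_pmf (iid_pmf n p))"
  unfolding set_pmf_iid_pmf using finite_lists_length_eq[of "set_pmf p" n]
  by (simp add: conj_commute)

lemma expect_iid_pmf_Suc:
  "finite (set_pmf p) \<Longrightarrow>
   expect (iid_pmf (Suc n) p) f = expect p (\<lambda>z. expect (iid_pmf n p) (\<lambda>zs. f (z # zs)))"
  unfolding iid_pmf_Suc_pair by (simp add: expect_map_pmf expect_pair_pmf finite_set_pmf_iid_pmf)

lemma pmf_iid_pmf:
  "pmf (iid_pmf n p) zs = (if length zs = n then prod_list (map (pmf p) zs) else 0)"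
proof (induction n arbitrary: zs)
  case 0
  then show ?case by (simp add: pmf_return)
next
  case (Suc n)
  show ?case
  proof (cases zs)
    case Nil
    then show ?thesis unfolding iid_pmf_Suc_pair by (auto simp: pmf_eq_0_set_pmf)
  next
    case (Cons z zs')
    have "pmf (iid_pmf (Suc n) p) zs = pmf (pair_pmf p (iid_pmf n p)) (z, zs')"
      unfolding iid_pmf_Suc_pair Cons
      by (subst pmf_map_inj'[symmetric, of "\<lambda>(x, xs). x # xs"]) (auto simp: inj_def)
    then show ?thesis using Suc Cons by (simp add: pmf_pair)
  qed
qed

lemma map_pmf_map_iid_pmf: "map_pmf (map f) (iid_pmf n p) = iid_pmf n (map_pmf f p)"
proof (induction n)
  case (Suc n)
  have "map_pmf (map f) (iid_pmf (Suc n) p) =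
      bind_pmf p (\<lambda>x. map_pmf ((#) (f x)) (map_pmf (map f) (iid_pmf n p)))"
    by (simp add: map_bind_pmf map_pmf_comp)
  then show ?case by (simp add: Suc bind_map_pmf)
qed simp

lemma length_in_set_pmf_block_pmf:
  "(x1, x2) \<in> set_pmf (block_pmf n p) \<Longrightarrow> length x1 = n \<and> length x2 = n"
  unfolding block_pmf_def by (auto simp: set_pmf_iid_pmf)

lemma finite_set_pmf_block_pmf: "finite (set_pmf p) \<Longrightarrow> finite (set_pmf (block_pmf n p))"
  unfolding block_pmf_def by (simp add: finite_set_pmf_iid_pmf)

lemma pmf_block_pmf:
  assumes "length x1 = n" and "length x2 = n"
  shows "pmf (block_pmf n p) (x1, x2) = block_joint p x1 x2"
proof -
  have inj: "inj (\<lambda>zs. (map fst zs, map snd zs))"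
    by (rule injI) (metis zip_map_fst_snd prod.inject)
  have "pmf (block_pmf n p) (x1, x2) = pmf (block_pmf n p) ((\<lambda>zs. (map fst zs, map snd zs)) (zip x1 x2))"
    using assms by simp
  also have "\<dots> = pmf (iid_pmf n p) (zip x1 x2)"
    unfolding block_pmf_def by (rule pmf_map_inj'[OF inj])
  also have "\<dots> = block_joint p x1 x2"
    using assms by (simp add: pmf_iid_pmf block_joint_def case_prod_unfold)
  finally show ?thesis .
qed

lemma map_fst_block_pmf: "map_pmf fst (block_pmf n p) = iid_pmf n (map_pmf fst p)"
  unfolding block_pmf_def by (simp add: map_pmf_comp map_pmf_map_iid_pmf[symmetric])

lemma map_snd_block_pmf: "map_pmf snd (block_pmf n p) = iid_pmf n (map_pmf snd p)"
  unfolding block_pmf_def by (simp add: map_pmf_comp map_pmf_map_iid_pmf[symmetric])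

section \<open>Information inequalities\<close>

lemma log_inverse_antimono: "0 < b \<Longrightarrow> b \<le> a \<Longrightarrow> log 2 (1 / a) \<le> log 2 (1 / b)"
  by (subst log_le_cancel_iff) (auto simp: divide_simps)

lemma log_sum_inequality:
  assumes "finite I" and "\<And>i. i \<in> I \<Longrightarrow> w i > 0" and "\<And>i. i \<in> I \<Longrightarrow> r i > 0"
  shows "(\<Sum>i\<in>I. w i) * log 2 ((\<Sum>i\<in>I. w i) / (\<Sum>i\<in>I. r i)) \<le> (\<Sum>i\<in>I. w i * log 2 (w i / r i))"
proof (cases "I = {}")
  case False
  define W where "W = (\<Sum>i\<in>I. w i)"
  define S where "S = (\<Sum>i\<in>I. r i)"
  have W: "W > 0" and S: "S > 0"
    unfolding W_def S_def using assms False by (auto intro!: sum_pos)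
  have "w i * log 2 (W / S) - w i * log 2 (w i / r i) \<le> (r i * W / S - w i) / ln 2"
    if i: "i \<in> I" for i
  proof -
    have pos: "r i * W / (S * w i) > 0"
      using assms(2,3)[OF i] W S by simp
    have "ln (r i * W / (S * w i)) = ln (W / S) - ln (w i / r i)"
      using assms(2,3)[OF i] W S by (simp add: ln_div ln_mult)
    then have "w i * log 2 (W / S) - w i * log 2 (w i / r i) = w i * (ln (r i * W / (S * w i)) / ln 2)"
      by (simp add: log_def right_diff_distrib diff_divide_distrib)
    also have "\<dots> \<le> w i * ((r i * W / (S * w i) - 1) / ln 2)"
      using ln_le_minus_one[OF pos] assms(2)[OF i]
      by (intro mult_left_mono divide_right_mono) auto
    also have "\<dots> = (r i * W / S - w i) / ln 2"
      using assms(2)[OF i] by (simp add: field_simps)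
    finally show ?thesis .
  qed
  then have "(\<Sum>i\<in>I. w i * log 2 (W / S) - w i * log 2 (w i / r i)) \<le> (\<Sum>i\<in>I. (r i * W / S - w i) / ln 2)"
    by (rule sum_mono)
  also have "\<dots> = 0"
    using S unfolding W_def S_def
    by (simp add: sum_divide_distrib[symmetric] sum_subtractf sum_distrib_right[symmetric])
  finally have "W * log 2 (W / S) - (\<Sum>i\<in>I. w i * log 2 (w i / r i)) \<le> 0"
    by (simp add: sum_subtractf sum_distrib_right[symmetric] W_def)
  then show ?thesis
    unfolding W_def S_def by linarith
qed simp

lemma gibbs_inequality:
  assumes "finite I" and "\<And>i. i \<in> I \<Longrightarrow> w i > 0" and "\<And>i. i \<in> I \<Longrightarrow> r i > 0"
    and "(\<Sum>i\<in>I. r i) \<le> (\<Sum>i\<in>I. w i)"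
  shows "0 \<le> (\<Sum>i\<in>I. w i * log 2 (w i / r i))"
proof (cases "I = {}")
  case False
  have "(\<Sum>i\<in>I. w i) > 0" and "(\<Sum>i\<in>I. r i) > 0"
    using assms False by (auto intro!: sum_pos)
  then have "0 \<le> (\<Sum>i\<in>I. w i) * log 2 ((\<Sum>i\<in>I. w i) / (\<Sum>i\<in>I. r i))"
    using assms(4) by simp
  also have "\<dots> \<le> (\<Sum>i\<in>I. w i * log 2 (w i / r i))"
    using assms(1-3) by (rule log_sum_inequality)
  finally show ?thesis .
qed simp

lemma ent_eq_expect: "ent p = expect p (\<lambda>x. log 2 (1 / pmf p x))"
  unfolding ent_def expect_def by (simp add: log_recip)

definition kl_div :: "'a pmf \<Rightarrow> 'a pmf \<Rightarrow> real" where
  "kl_div p q = (\<Sum>c\<in>set_pmf p. pmf p c * log 2 (pmf p c / pmf q c))"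

lemma kl_div_nonneg:
  assumes "finite (set_pmf p)" and "set_pmf p \<subseteq> set_pmf q"
  shows "0 \<le> kl_div p q"
  unfolding kl_div_def
proof (rule gibbs_inequality)
  show "(\<Sum>c\<in>set_pmf p. pmf q c) \<le> (\<Sum>c\<in>set_pmf p. pmf p c)"
    using assms(1) by (simp add: sum_pmf_eq_1 measure_measure_pmf_finite[symmetric])
qed (use assms in \<open>auto intro: pmf_positive\<close>)

lemma cross_entropy_eq_kl_div_plus_ent:
  assumes "finite (set_pmf p)" and "set_pmf p \<subseteq> set_pmf q"
  shows "expect p (\<lambda>c. log 2 (1 / pmf q c)) = kl_div p q + ent p"
proof -
  have "log 2 (1 / pmf q c) = log 2 (pmf p c / pmf q c) + log 2 (1 / pmf p c)"
    if "c \<in> set_pmf p" for c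
    using that assms(2) pmf_positive[of c p] pmf_positive[of c q]
    by (auto simp: log_divide log_recip)
  then have "expect p (\<lambda>c. log 2 (1 / pmf q c)) =
      expect p (\<lambda>c. log 2 (pmf p c / pmf q c) + log 2 (1 / pmf p c))"
    by (rule expect_cong)
  also have "\<dots> = kl_div p q + ent p"
    unfolding expect_add ent_eq_expect kl_div_def expect_def ..
  finally show ?thesis .
qed

lemma ent_map_pmf_le:
  assumes "finite (set_pmf p)"
    and "\<And>k k'. k \<in> set_pmf p \<Longrightarrow> k' \<in> set_pmf p \<Longrightarrow> \<kappa> k = \<kappa> k' \<Longrightarrow> f k = f k'"
  shows "ent (map_pmf f p) \<le> ent (map_pmf \<kappa> p)"
proof -
  have "pmf (map_pmf \<kappa> p) (\<kappa> k) \<le> pmf (map_pmf f p) (f k)" if "k \<in> set_pmf p" for k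
  proof -
    have "pmf (map_pmf \<kappa> p) (\<kappa> k) = (\<Sum>k'\<in>set_pmf p \<inter> \<kappa> -` {\<kappa> k}. pmf p k')"
      using assms(1) by (simp add: pmf_map measure_pmf_eq_sum)
    also have "\<dots> \<le> (\<Sum>k'\<in>set_pmf p \<inter> f -` {f k}. pmf p k')"
      using assms(1) assms(2)[OF _ that] by (intro sum_mono2) auto
    also have "\<dots> = pmf (map_pmf f p) (f k)"
      using assms(1) by (simp add: pmf_map measure_pmf_eq_sum)
    finally show ?thesis .
  qed
  then have "expect p (\<lambda>k. log 2 (1 / pmf (map_pmf f p) (f k))) \<le>
      expect p (\<lambda>k. log 2 (1 / pmf (map_pmf \<kappa> p) (\<kappa> k)))"
    by (intro expect_mono log_inverse_antimono) (auto intro: pmf_positive)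
  then show ?thesis
    using assms(1) by (simp add: ent_eq_expect expect_map_pmf)
qed

lemma ent_le_log_card_fibre_plus_ent:
  assumes "finite G" and "set_pmf W \<subseteq> G" and "\<And>e. card {c\<in>G. u c = e} \<le> N" and "N > 0"
  shows "ent W \<le> log 2 N + ent (map_pmf u W)"
proof -
  define T where "T = set_pmf W"
  define r where "r c = pmf (map_pmf u W) (u c) / N" for c
  have fT: "finite T"
    unfolding T_def using assms(1,2) by (rule finite_subset[rotated])
  have r_pos: "r c > 0" if "c \<in> T" for c
    unfolding r_def using assms(4) that T_def by (auto intro!: divide_pos_pos pmf_positive)
  have "(\<Sum>c\<in>T. r c) = (\<Sum>e\<in>u ` T. real (card {c\<in>T. u c = e}) * (pmf (map_pmf u W) e / N))"
    unfolding r_def using fT by (subst sum.image_gen[where g = u]) (auto intro!: sum.cong)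
  also have "\<dots> \<le> (\<Sum>e\<in>u ` T. pmf (map_pmf u W) e)"
  proof (rule sum_mono)
    fix e
    have "card {c\<in>T. u c = e} \<le> card {c\<in>G. u c = e}"
      using assms(1,2) T_def by (intro card_mono) auto
    then have "real (card {c\<in>T. u c = e}) \<le> N"
      using assms(3)[of e] by linarith
    then have "real (card {c\<in>T. u c = e}) * (pmf (map_pmf u W) e / N) \<le> N * (pmf (map_pmf u W) e / N)"
      by (intro mult_right_mono) auto
    then show "real (card {c\<in>T. u c = e}) * (pmf (map_pmf u W) e / N) \<le> pmf (map_pmf u W) e"
      using assms(4) by simp
  qed
  also have "\<dots> \<le> (\<Sum>c\<in>T. pmf W c)"
    using fT by (simp add: T_def sum_pmf_eq_1 measure_measure_pmf_finite[symmetric])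
  finally have "0 \<le> (\<Sum>c\<in>T. pmf W c * log 2 (pmf W c / r c))"
    by (intro gibbs_inequality fT r_pos) (auto simp: T_def intro: pmf_positive)
  also have "\<dots> = expect W (\<lambda>c. log 2 (1 / r c)) - ent W"
  proof -
    have "pmf W c * log 2 (pmf W c / r c) = pmf W c * log 2 (1 / r c) - pmf W c * log 2 (1 / pmf W c)"
      if "c \<in> T" for c
      using r_pos[OF that] pmf_positive[of c W] that
      by (simp add: T_def log_divide log_recip right_diff_distrib)
    then show ?thesis
      unfolding ent_eq_expect expect_def by (simp add: sum_subtractf T_def)
  qed
  also have "expect W (\<lambda>c. log 2 (1 / r c)) = expect W (\<lambda>c. log 2 N + log 2 (1 / pmf (map_pmf u W) (u c)))"
  proof (rule expect_cong)
    fix c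
    assume "c \<in> set_pmf W"
    then have "pmf (map_pmf u W) (u c) > 0"
      by (auto intro: pmf_positive)
    then show "log 2 (1 / r c) = log 2 N + log 2 (1 / pmf (map_pmf u W) (u c))"
      using assms(4) by (simp add: r_def log_divide log_recip)
  qed
  also have "\<dots> = log 2 N + ent (map_pmf u W)"
    using fT by (simp add: T_def expect_add expect_const ent_eq_expect expect_map_pmf)
  finally show ?thesis by simp
qed

lemma ent_iid_pmf:
  assumes "finite (set_pmf q)"
  shows "ent (iid_pmf n q) = real n * ent q"
proof (induction n)
  case 0
  then show ?case by (simp add: ent_eq_expect expect_return_pmf)
next
  case (Suc n)
  have fin: "finite (set_pmf (iid_pmf n q))"
    using assms by (rule finite_set_pmf_iid_pmf)
  have "ent (iid_pmf (Suc n) q) =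
      expect q (\<lambda>z. expect (iid_pmf n q) (\<lambda>zs. log 2 (1 / pmf (iid_pmf (Suc n) q) (z # zs))))"
    unfolding ent_eq_expect by (rule expect_iid_pmf_Suc[OF assms])
  also have "\<dots> = expect q (\<lambda>z. expect (iid_pmf n q)
      (\<lambda>zs. log 2 (1 / pmf q z) + log 2 (1 / pmf (iid_pmf n q) zs)))"
  proof (intro expect_cong)
    fix z zs
    assume z: "z \<in> set_pmf q" and zs: "zs \<in> set_pmf (iid_pmf n q)"
    have "pmf (iid_pmf (Suc n) q) (z # zs) = pmf q z * pmf (iid_pmf n q) zs"
      using zs by (simp add: pmf_iid_pmf set_pmf_iid_pmf del: iid_pmf.simps)
    then show "log 2 (1 / pmf (iid_pmf (Suc n) q) (z # zs)) =
        log 2 (1 / pmf q z) + log 2 (1 / pmf (iid_pmf n q) zs)"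
      using pmf_positive[OF z] pmf_positive[OF zs] by (simp add: log_recip log_mult_pos)
  qed
  also have "\<dots> = ent q + real n * ent q"
    using assms fin by (simp add: expect_add expect_const Suc ent_eq_expect[symmetric])
  finally show ?case by (simp add: algebra_simps)
qed

section \<open>Encryption with an independent key\<close>

definition encryption_pmf :: "'k pmf \<Rightarrow> 'x pmf \<Rightarrow> ('k \<Rightarrow> 'x \<Rightarrow> 'c) \<Rightarrow> ('c \<times> 'x) pmf" where
  "encryption_pmf \<pi> P g = map_pmf (\<lambda>(k, x). (g k x, x)) (pair_pmf \<pi> P)"

lemma map_snd_encryption_pmf: "map_pmf snd (encryption_pmf \<pi> P g) = P"
  unfolding encryption_pmf_def
  by (simp add: map_pmf_comp case_prod_unfold map_snd_pair_pmf[of \<pi> P, unfolded map_pmf_def[symmetric]])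

lemma set_pmf_map_fst_encryption_pmf:
  "x \<in> set_pmf P \<Longrightarrow> set_pmf (map_pmf (\<lambda>k. g k x) \<pi>) \<subseteq> set_pmf (map_pmf fst (encryption_pmf \<pi> P g))"
  unfolding encryption_pmf_def by force

lemma pmf_encryption_pmf:
  assumes "finite (set_pmf P)"
  shows "pmf (encryption_pmf \<pi> P g) (c, x) = pmf P x * pmf (map_pmf (\<lambda>k. g k x) \<pi>) c"
proof -
  have "encryption_pmf \<pi> P g = bind_pmf P (\<lambda>x. map_pmf (\<lambda>c. (c, x)) (map_pmf (\<lambda>k. g k x) \<pi>))"
    unfolding encryption_pmf_def pair_commute_pmf[of \<pi> P]
    by (simp add: map_pmf_comp pair_pmf_def map_bind_pmf case_prod_unfold map_pmf_def[symmetric])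
  moreover have "pmf (map_pmf (\<lambda>c. (c, x')) (map_pmf (\<lambda>k. g k x') \<pi>)) (c, x) =
      (if x' = x then pmf (map_pmf (\<lambda>k. g k x) \<pi>) c else 0)" for x'
  proof (cases "x' = x")
    case True
    then show ?thesis
      using pmf_map_inj'[of "\<lambda>c. (c, x)" "map_pmf (\<lambda>k. g k x) \<pi>" c] by (simp add: inj_def)
  qed (auto simp: pmf_eq_0_set_pmf)
  ultimately have "pmf (encryption_pmf \<pi> P g) (c, x) =
      expect P (\<lambda>x'. if x' = x then pmf (map_pmf (\<lambda>k. g k x) \<pi>) c else 0)"
    using assms by (simp add: pmf_bind expect_eq_integral)
  also have "\<dots> = pmf P x * pmf (map_pmf (\<lambda>k. g k x) \<pi>) c"
    unfolding expect_def
    by (cases "x \<in> set_pmf P") (auto simp: if_distrib assms pmf_eq_0_set_pmf cong: if_cong)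
  finally show ?thesis .
qed

lemma mutual_info_encryption_pmf:
  assumes "finite (set_pmf P)" and "finite (set_pmf \<pi>)"
  shows "mutual_info (encryption_pmf \<pi> P g) =
    expect P (\<lambda>x. kl_div (map_pmf (\<lambda>k. g k x) \<pi>) (map_pmf fst (encryption_pmf \<pi> P g)))"
proof -
  define q where "q = encryption_pmf \<pi> P g"
  define W where "W x = map_pmf (\<lambda>k. g k x) \<pi>" for x
  have "mutual_info q = expect q (\<lambda>(c, x). log 2 (pmf q (c, x) / (pmf (map_pmf fst q) c * pmf P x)))"
    unfolding mutual_info_def expect_def q_def map_snd_encryption_pmf by (simp add: case_prod_unfold)
  also have "\<dots> = expect P (\<lambda>x. expect \<pi>
      (\<lambda>k. log 2 (pmf q (g k x, x) / (pmf (map_pmf fst q) (g k x) * pmf P x))))"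
    using assms unfolding q_def encryption_pmf_def
    by (simp add: expect_map_pmf expect_pair_pmf expect_commute[of \<pi> P])
  also have "\<dots> = expect P (\<lambda>x. expect (W x) (\<lambda>c. log 2 (pmf (W x) c / pmf (map_pmf fst q) c)))"
  proof (intro expect_cong)
    fix x
    assume "x \<in> set_pmf P"
    then show "expect \<pi> (\<lambda>k. log 2 (pmf q (g k x, x) / (pmf (map_pmf fst q) (g k x) * pmf P x))) =
        expect (W x) (\<lambda>c. log 2 (pmf (W x) c / pmf (map_pmf fst q) c))"
      using assms pmf_positive[of x P]
      by (simp add: W_def q_def pmf_encryption_pmf expect_map_pmf)
  qed
  also have "\<dots> = expect P (\<lambda>x. kl_div (W x) (map_pmf fst q))"
    unfolding kl_div_def expect_def ..
  finally show ?thesis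
    unfolding q_def W_def .
qed

(* Injectivity of each g k on A gives (SUM x:A. PC (g k x)) <= 1, which lets the log-sum
   inequality compare the weights P x * pi k with pi k * PC (g k x). *)
lemma log_prob_le_partial_cross_entropy:
  fixes P :: "'x pmf" and \<pi> :: "'k pmf" and g :: "'k \<Rightarrow> 'x \<Rightarrow> 'c"
  defines "PC \<equiv> map_pmf fst (encryption_pmf \<pi> P g)"
  assumes fin: "finite (set_pmf P)" "finite (set_pmf \<pi>)"
    and A: "A \<subseteq> set_pmf P" "A \<noteq> {}"
    and inj: "\<And>k. k \<in> set_pmf \<pi> \<Longrightarrow> inj_on (g k) A"
  shows "measure_pmf.prob P A * log 2 (measure_pmf.prob P A) \<le>
    (\<Sum>x\<in>A. pmf P x * (log 2 (pmf P x) + expect \<pi> (\<lambda>k. log 2 (1 / pmf PC (g k x)))))"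
proof -
  define a where "a = measure_pmf.prob P A"
  define S where "S = set_pmf \<pi>"
  define w where "w = (\<lambda>(x, k). pmf P x * pmf \<pi> k)"
  define r where "r = (\<lambda>(x, k). pmf \<pi> k * pmf PC (g k x))"
  have fA: "finite A" and fS: "finite S"
    using A fin finite_subset unfolding S_def by auto
  have S_sum: "(\<Sum>k\<in>S. pmf \<pi> k) = 1"
    unfolding S_def using fin(2) by (rule sum_pmf_eq_1) simp
  have PC_pos: "pmf PC (g k x) > 0" if "x \<in> A" "k \<in> S" for x k
  proof -
    have "g k x \<in> set_pmf PC"
      using that A set_pmf_map_fst_encryption_pmf[of x P g \<pi>] unfolding PC_def S_def by auto
    then show ?thesis
      by (rule pmf_positive)
  qed
  have w_pos: "w i > 0" if "i \<in> A \<times> S" for i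
    using that A unfolding w_def S_def by (auto intro!: mult_pos_pos pmf_positive)
  have r_pos: "r i > 0" if "i \<in> A \<times> S" for i
    using that PC_pos pmf_positive[of _ \<pi>] unfolding r_def S_def by (auto intro!: mult_pos_pos)
  have w_sum: "(\<Sum>i\<in>A \<times> S. w i) = a"
    unfolding a_def w_def sum.cartesian_product[symmetric] using fin fA S_sum
    by (simp add: sum_distrib_left[symmetric] measure_measure_pmf_finite)
  have "(\<Sum>i\<in>A \<times> S. r i) = (\<Sum>k\<in>S. pmf \<pi> k * (\<Sum>x\<in>A. pmf PC (g k x)))"
    unfolding r_def sum.cartesian_product[symmetric] by (simp add: sum.swap[of _ A] sum_distrib_left)
  also have "\<dots> \<le> (\<Sum>k\<in>S. pmf \<pi> k * 1)"
  proof (intro sum_mono mult_left_mono)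
    fix k
    assume "k \<in> S"
    then have "(\<Sum>x\<in>A. pmf PC (g k x)) = (\<Sum>c\<in>g k ` A. pmf PC c)"
      using inj S_def by (simp add: sum.reindex)
    also have "\<dots> \<le> 1"
      using fA by (simp add: measure_measure_pmf_finite[symmetric])
    finally show "(\<Sum>x\<in>A. pmf PC (g k x)) \<le> 1" .
  qed simp
  finally have r_sum: "(\<Sum>i\<in>A \<times> S. r i) \<le> 1"
    using S_sum by simp
  have r_sum_pos: "(\<Sum>i\<in>A \<times> S. r i) > 0"
    using A r_pos fA fS set_pmf_not_empty[of \<pi>] unfolding S_def by (intro sum_pos) auto
  have a_pos: "a > 0"
    using w_sum w_pos A(2) fA fS set_pmf_not_empty[of \<pi>] unfolding S_def by (auto intro!: sum_pos)
  have "log 2 a \<le> log 2 (a / (\<Sum>i\<in>A \<times> S. r i))"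
    using a_pos r_sum r_sum_pos by (subst log_le_cancel_iff) (auto simp: divide_simps mult_left_le)
  then have "a * log 2 a \<le> a * log 2 (a / (\<Sum>i\<in>A \<times> S. r i))"
    using a_pos by simp
  also have "\<dots> \<le> (\<Sum>i\<in>A \<times> S. w i * log 2 (w i / r i))"
    using log_sum_inequality[of "A \<times> S" w r] fA fS w_pos r_pos w_sum by simp
  also have "\<dots> = (\<Sum>x\<in>A. \<Sum>k\<in>S. pmf P x * pmf \<pi> k * (log 2 (pmf P x) + log 2 (1 / pmf PC (g k x))))"
    unfolding sum.cartesian_product
  proof (intro sum.cong refl)
    fix i
    assume i: "i \<in> A \<times> S"
    then obtain x k where "i = (x, k)" "x \<in> A" "k \<in> S"
      by auto
    then show "w i * log 2 (w i / r i) =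
        (case i of (x, k) \<Rightarrow> pmf P x * pmf \<pi> k * (log 2 (pmf P x) + log 2 (1 / pmf PC (g k x))))"
      using w_pos[OF i] PC_pos[of x k] pmf_positive[of k \<pi>] pmf_positive[of x P] A
      unfolding w_def r_def S_def by (auto simp: log_divide log_recip)
  qed
  also have "\<dots> = (\<Sum>x\<in>A. pmf P x * (log 2 (pmf P x) + expect \<pi> (\<lambda>k. log 2 (1 / pmf PC (g k x)))))"
  proof (rule sum.cong[OF refl])
    fix x
    have "(\<Sum>k\<in>S. pmf P x * pmf \<pi> k * (log 2 (pmf P x) + log 2 (1 / pmf PC (g k x)))) =
        pmf P x * (log 2 (pmf P x) * (\<Sum>k\<in>S. pmf \<pi> k) + (\<Sum>k\<in>S. pmf \<pi> k * log 2 (1 / pmf PC (g k x))))"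
      by (simp add: sum_distrib_left sum_distrib_right distrib_left sum.distrib algebra_simps)
    then show "(\<Sum>k\<in>S. pmf P x * pmf \<pi> k * (log 2 (pmf P x) + log 2 (1 / pmf PC (g k x)))) =
        pmf P x * (log 2 (pmf P x) + expect \<pi> (\<lambda>k. log 2 (1 / pmf PC (g k x))))"
      using S_sum unfolding expect_def S_def by simp
  qed
  finally show ?thesis
    unfolding a_def .
qed

lemma partial_entropy_le_mutual_info:
  fixes P :: "'x pmf" and \<pi> :: "'k pmf" and g :: "'k \<Rightarrow> 'x \<Rightarrow> 'c"
  assumes fin: "finite (set_pmf P)" "finite (set_pmf \<pi>)"
    and A: "A \<subseteq> set_pmf P" "A \<noteq> {}"
    and inj: "\<And>k. k \<in> set_pmf \<pi> \<Longrightarrow> inj_on (g k) A"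
    and ent_le: "\<And>x. x \<in> A \<Longrightarrow> ent (map_pmf (\<lambda>k. g k x) \<pi>) \<le> B"
  shows "(\<Sum>x\<in>A. pmf P x * log 2 (1 / pmf P x)) \<le>
    measure_pmf.prob P A * log 2 (1 / measure_pmf.prob P A) + mutual_info (encryption_pmf \<pi> P g) +
    measure_pmf.prob P A * B"
proof -
  define a where "a = measure_pmf.prob P A"
  define PC where "PC = map_pmf fst (encryption_pmf \<pi> P g)"
  define W where "W x = map_pmf (\<lambda>k. g k x) \<pi>" for x
  have fA: "finite A"
    using A fin finite_subset by auto
  have W_sub: "set_pmf (W x) \<subseteq> set_pmf PC" and fW: "finite (set_pmf (W x))"
    if "x \<in> set_pmf P" for x
    using that fin set_pmf_map_fst_encryption_pmf[of x P g \<pi>] unfolding W_def PC_def by auto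
  have cross_eq: "expect \<pi> (\<lambda>k. log 2 (1 / pmf PC (g k x))) = kl_div (W x) PC + ent (W x)"
    if "x \<in> set_pmf P" for x
  proof -
    have "expect \<pi> (\<lambda>k. log 2 (1 / pmf PC (g k x))) = expect (W x) (\<lambda>c. log 2 (1 / pmf PC c))"
      unfolding W_def using fin(2) by (simp add: expect_map_pmf)
    then show ?thesis
      using cross_entropy_eq_kl_div_plus_ent[OF fW W_sub, OF that that] by simp
  qed
  have "(\<Sum>x\<in>A. pmf P x * expect \<pi> (\<lambda>k. log 2 (1 / pmf PC (g k x)))) \<le>
      (\<Sum>x\<in>A. pmf P x * (kl_div (W x) PC + B))"
    using A ent_le cross_eq by (intro sum_mono mult_left_mono) (auto simp: W_def)
  also have "\<dots> = (\<Sum>x\<in>A. pmf P x * kl_div (W x) PC) + a * B"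
    unfolding a_def using fA
    by (simp add: distrib_left sum.distrib sum_distrib_right measure_measure_pmf_finite)
  also have "(\<Sum>x\<in>A. pmf P x * kl_div (W x) PC) \<le> (\<Sum>x\<in>set_pmf P. pmf P x * kl_div (W x) PC)"
    using fin A kl_div_nonneg[OF fW W_sub] by (intro sum_mono2) auto
  also have "\<dots> = mutual_info (encryption_pmf \<pi> P g)"
    unfolding mutual_info_encryption_pmf[OF fin] expect_def W_def PC_def ..
  finally have "(\<Sum>x\<in>A. pmf P x * expect \<pi> (\<lambda>k. log 2 (1 / pmf PC (g k x)))) \<le>
      mutual_info (encryption_pmf \<pi> P g) + a * B"
    by simp
  moreover have "a * log 2 a \<le>
      (\<Sum>x\<in>A. pmf P x * log 2 (pmf P x)) + (\<Sum>x\<in>A. pmf P x * expect \<pi> (\<lambda>k. log 2 (1 / pmf PC (g k x))))"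
    using log_prob_le_partial_cross_entropy[OF fin A inj] unfolding a_def PC_def
    by (simp add: distrib_left sum.distrib)
  ultimately show ?thesis
    unfolding a_def[symmetric] by (simp add: log_recip sum_negf)
qed

section \<open>Asymptotic equipartition\<close>

lemma expect_iid_sum_list:
  assumes "finite (set_pmf p)" and "expect p \<psi> = 0"
  shows "expect (iid_pmf n p) (\<lambda>zs. sum_list (map \<psi> zs)) = 0"
proof (induction n)
  case (Suc n)
  then show ?case
    using assms finite_set_pmf_iid_pmf[OF assms(1), of n]
    by (simp add: expect_iid_pmf_Suc expect_add expect_const del: iid_pmf.simps)
qed (simp add: expect_return_pmf)

lemma expect_iid_sum_list_squared:
  assumes "finite (set_pmf p)" and "expect p \<psi> = 0"
  shows "expect (iid_pmf n p) (\<lambda>zs. (sum_list (map \<psi> zs))\<^sup>2) = real n * expect p (\<lambda>z. (\<psi> z)\<^sup>2)"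
proof (induction n)
  case (Suc n)
  have fin: "finite (set_pmf (iid_pmf n p))"
    using assms(1) by (rule finite_set_pmf_iid_pmf)
  have "expect (iid_pmf (Suc n) p) (\<lambda>zs. (sum_list (map \<psi> zs))\<^sup>2) =
      expect p (\<lambda>z. expect (iid_pmf n p)
        (\<lambda>zs. (\<psi> z)\<^sup>2 + ((2 * \<psi> z) * sum_list (map \<psi> zs) + (sum_list (map \<psi> zs))\<^sup>2)))"
    using assms(1) by (simp add: expect_iid_pmf_Suc power2_sum algebra_simps del: iid_pmf.simps)
  also have "\<dots> = expect p (\<lambda>z. (\<psi> z)\<^sup>2 + real n * expect p (\<lambda>z. (\<psi> z)\<^sup>2))"
    using fin by (simp add: expect_add expect_cmult expect_const Suc expect_iid_sum_list[OF assms])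
  also have "\<dots> = real (Suc n) * expect p (\<lambda>z. (\<psi> z)\<^sup>2)"
    using assms(1) by (simp add: expect_add expect_const algebra_simps)
  finally show ?case .
qed (simp add: expect_return_pmf)

lemma chebyshev_iid_sum_list:
  assumes "finite (set_pmf p)" and "expect p \<psi> = 0" and "t > 0"
  shows "measure_pmf.prob (iid_pmf n p) {zs. t \<le> \<bar>sum_list (map \<psi> zs)\<bar>} \<le>
    real n * expect p (\<lambda>z. (\<psi> z)\<^sup>2) / t\<^sup>2"
proof -
  have "{zs. t \<le> \<bar>sum_list (map \<psi> zs)\<bar>} = {zs. t\<^sup>2 \<le> (sum_list (map \<psi> zs))\<^sup>2}"
    using assms(3) by (auto simp: abs_le_square_iff[symmetric])
  moreover have "measure_pmf.prob (iid_pmf n p) {zs. t\<^sup>2 \<le> (sum_list (map \<psi> zs))\<^sup>2} \<le>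
      expect (iid_pmf n p) (\<lambda>zs. (sum_list (map \<psi> zs))\<^sup>2) / t\<^sup>2"
    using assms(1,3) by (intro markov_inequality_expect finite_set_pmf_iid_pmf) auto
  ultimately show ?thesis
    using expect_iid_sum_list_squared[OF assms(1,2)] by simp
qed

lemma log_inverse_prod_list:
  "(\<And>z. z \<in> set zs \<Longrightarrow> f z > 0) \<Longrightarrow>
   log 2 (1 / prod_list (map f zs)) = sum_list (map (\<lambda>z. log 2 (1 / f z)) zs)"
proof (induction zs)
  case (Cons z zs)
  have "prod_list (map f zs) > 0"
    using Cons.prems by (induction zs) (auto intro!: mult_pos_pos)
  then show ?case
    using Cons by (simp add: log_recip log_mult_pos)
qed simp

lemma weak_law_log_prod_list:
  assumes fin: "finite (set_pmf p)" and pos: "\<And>z. z \<in> set_pmf p \<Longrightarrow> f z > 0"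
    and "n > 0" and "\<gamma> > 0"
  defines "H \<equiv> expect p (\<lambda>z. log 2 (1 / f z))"
  shows "measure_pmf.prob (iid_pmf n p)
      {zs. \<gamma> < \<bar>1 / real n * log 2 (1 / prod_list (map f zs)) - H\<bar>} \<le>
    expect p (\<lambda>z. (log 2 (1 / f z) - H)\<^sup>2) / (real n * \<gamma>\<^sup>2)"
proof -
  define \<psi> where "\<psi> z = log 2 (1 / f z) - H" for z
  have mean: "expect p \<psi> = 0"
    unfolding \<psi>_def H_def using fin by (simp add: expect_diff expect_const)
  have "{zs. \<gamma> < \<bar>1 / real n * log 2 (1 / prod_list (map f zs)) - H\<bar>} \<inter> set_pmf (iid_pmf n p) \<subseteq>
      {zs. real n * \<gamma> \<le> \<bar>sum_list (map \<psi> zs)\<bar>}"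
  proof safe
    fix zs
    assume dev: "\<gamma> < \<bar>1 / real n * log 2 (1 / prod_list (map f zs)) - H\<bar>"
      and zs: "zs \<in> set_pmf (iid_pmf n p)"
    then have len: "length zs = n" and "set zs \<subseteq> set_pmf p"
      by (auto simp: set_pmf_iid_pmf)
    moreover have "sum_list (map \<psi> zs) = sum_list (map (\<lambda>z. log 2 (1 / f z)) zs) - real (length zs) * H"
      by (induction zs) (simp_all add: \<psi>_def algebra_simps)
    ultimately have "log 2 (1 / prod_list (map f zs)) = sum_list (map \<psi> zs) + real n * H"
      using pos by (subst log_inverse_prod_list) auto
    then have "1 / real n * log 2 (1 / prod_list (map f zs)) - H = sum_list (map \<psi> zs) / real n"
      using \<open>n > 0\<close> by (simp add: field_simps)
    then show "real n * \<gamma> \<le> \<bar>sum_list (map \<psi> zs)\<bar>"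
      using dev \<open>n > 0\<close> by (simp add: field_simps)
  qed
  then have "measure_pmf.prob (iid_pmf n p) {zs. \<gamma> < \<bar>1 / real n * log 2 (1 / prod_list (map f zs)) - H\<bar>} \<le>
      measure_pmf.prob (iid_pmf n p) {zs. real n * \<gamma> \<le> \<bar>sum_list (map \<psi> zs)\<bar>}"
    by (subst measure_Int_set_pmf[symmetric]) (rule measure_pmf.finite_measure_mono, auto)
  also have "\<dots> \<le> real n * expect p (\<lambda>z. (\<psi> z)\<^sup>2) / (real n * \<gamma>)\<^sup>2"
    using fin mean assms(3,4) by (intro chebyshev_iid_sum_list) auto
  also have "\<dots> = expect p (\<lambda>z. (log 2 (1 / f z) - H)\<^sup>2) / (real n * \<gamma>\<^sup>2)"
    using assms(3) by (simp add: \<psi>_def power2_eq_square)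
  finally show ?thesis .
qed

lemma block_cond_map_fst_snd:
  "block_cond p (map fst zs) (map snd zs) =
    prod_list (map (\<lambda>(u, v). pmf p (u, v) / pmf (map_pmf snd p) v) zs)"
  unfolding block_cond_def zip_map_fst_snd ..

lemma pmf_swap_pmf: "pmf (swap_pmf p) (v, u) = pmf p (u, v)"
  unfolding swap_pmf_def using pmf_map_inj'[of "\<lambda>(u, v). (v, u)" p "(u, v)"]
  by (simp add: inj_def)

lemma map_snd_swap_pmf: "map_pmf snd (swap_pmf p) = map_pmf fst p"
  unfolding swap_pmf_def by (simp add: map_pmf_comp case_prod_unfold)

lemma block_cond_swap_map_snd_fst:
  "block_cond (swap_pmf p) (map snd zs) (map fst zs) =
    prod_list (map (\<lambda>(u, v). pmf p (u, v) / pmf (map_pmf fst p) u) zs)"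
proof -
  have "zip (map snd zs) (map fst zs) = map prod.swap zs"
    by (induction zs) auto
  then show ?thesis
    unfolding block_cond_def by (simp add: comp_def case_prod_unfold pmf_swap_pmf map_snd_swap_pmf)
qed

lemma block_joint_map_fst_snd: "block_joint p (map fst zs) (map snd zs) = prod_list (map (pmf p) zs)"
  unfolding block_joint_def zip_map_fst_snd by (simp add: case_prod_unfold)

lemma cond_ent_eq_expect:
  "cond_ent p = expect p (\<lambda>(u, v). log 2 (1 / (pmf p (u, v) / pmf (map_pmf snd p) v)))"
  unfolding cond_ent_def expect_def log_recip by (simp add: case_prod_unfold)

lemma cond_ent_swap_eq_expect:
  assumes "finite (set_pmf p)"
  shows "cond_ent (swap_pmf p) = expect p (\<lambda>(u, v). log 2 (1 / (pmf p (u, v) / pmf (map_pmf fst p) u)))"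
proof -
  have "cond_ent (swap_pmf p) =
      expect (swap_pmf p) (\<lambda>(v, u). log 2 (1 / (pmf p (u, v) / pmf (map_pmf fst p) u)))"
    unfolding cond_ent_eq_expect by (simp add: pmf_swap_pmf map_snd_swap_pmf)
  then show ?thesis
    using assms by (simp add: swap_pmf_def expect_map_pmf case_prod_unfold)
qed

lemma nu_tendsto_zero:
  fixes p :: "('a \<times> 'b) pmf"
  assumes fin: "finite (set_pmf p)" and "\<gamma> > 0"
  shows "(\<lambda>n. nu p n \<gamma>) \<longlonglongrightarrow> 0"
proof -
  define f1 where "f1 = (\<lambda>(u, v). pmf p (u, v) / pmf (map_pmf snd p) v)"
  define f2 where "f2 = (\<lambda>(u, v). pmf p (u, v) / pmf (map_pmf fst p) u)"
  define f3 where "f3 = pmf p"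
  define H where "H f = expect p (\<lambda>z. log 2 (1 / f z))" for f :: "'a \<times> 'b \<Rightarrow> real"
  define dev where "dev n f = {zs. \<gamma> < \<bar>1 / real n * log 2 (1 / prod_list (map f zs)) - H f\<bar>}" for n f
  define var where "var f = expect p (\<lambda>z. (log 2 (1 / f z) - H f)\<^sup>2)" for f
  have pos: "f1 z > 0" "f2 z > 0" "f3 z > 0" if "z \<in> set_pmf p" for z
    using that unfolding f1_def f2_def f3_def
    by (auto simp: case_prod_unfold intro!: divide_pos_pos pmf_positive)
  have dev_le: "measure_pmf.prob (iid_pmf n p) (dev n f) \<le> var f / (real n * \<gamma>\<^sup>2)"
    if "n > 0" and "\<And>z. z \<in> set_pmf p \<Longrightarrow> f z > 0" for n f
    unfolding dev_def var_def H_def by (rule weak_law_log_prod_list[OF fin that(2) that(1) \<open>\<gamma> > 0\<close>])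
  have nu_le: "nu p n \<gamma> \<le> (var f1 + var f2 + var f3) / \<gamma>\<^sup>2 / real n" if "n > 0" for n
  proof -
    let ?P = "iid_pmf n p"
    have "(\<lambda>zs. (map fst zs, map snd zs)) -` (- typ_set p n \<gamma>) \<inter> set_pmf ?P \<subseteq>
        dev n f1 \<union> dev n f2 \<union> dev n f3"
      by (auto simp: set_pmf_iid_pmf typ_set_def dev_def H_def f1_def f2_def f3_def
          block_cond_map_fst_snd block_cond_swap_map_snd_fst block_joint_map_fst_snd
          cond_ent_eq_expect[of p] cond_ent_swap_eq_expect[OF fin] ent_eq_expect case_prod_unfold)
    then have "nu p n \<gamma> \<le> measure_pmf.prob ?P (dev n f1 \<union> dev n f2 \<union> dev n f3)"
      unfolding nu_def block_pmf_def measure_map_pmf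
      by (subst measure_Int_set_pmf[symmetric]) (rule measure_pmf.finite_measure_mono, auto)
    also have "\<dots> \<le> measure_pmf.prob ?P (dev n f1) + measure_pmf.prob ?P (dev n f2) +
        measure_pmf.prob ?P (dev n f3)"
      using measure_Un_le[of "dev n f1 \<union> dev n f2" ?P "dev n f3"] measure_Un_le[of "dev n f1" ?P "dev n f2"]
      by simp
    also have "\<dots> \<le> var f1 / (real n * \<gamma>\<^sup>2) + var f2 / (real n * \<gamma>\<^sup>2) + var f3 / (real n * \<gamma>\<^sup>2)"
      using that pos by (intro add_mono dev_le) auto
    also have "\<dots> = (var f1 + var f2 + var f3) / \<gamma>\<^sup>2 / real n"
      by (simp add: add_divide_distrib mult.commute)
    finally show ?thesis .
  qed
  have lim: "(\<lambda>n. (var f1 + var f2 + var f3) / \<gamma>\<^sup>2 / real n) \<longlonglongrightarrow> 0"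
    by (rule lim_const_over_n)
  have upper: "\<forall>\<^sub>F n in sequentially. nu p n \<gamma> \<le> (var f1 + var f2 + var f3) / \<gamma>\<^sup>2 / real n"
    using eventually_gt_at_top[of 0] by eventually_elim (rule nu_le)
  have lower: "\<forall>\<^sub>F n in sequentially. 0 \<le> nu p n \<gamma>"
    unfolding nu_def by (intro always_eventually allI measure_nonneg)
  show ?thesis
    by (rule tendsto_sandwich[OF lower upper tendsto_const lim])
qed

section \<open>The converse bound\<close>

lemma measure_pmf_Int_set_pmf_ge:
  "measure_pmf.prob P (D \<inter> T \<inter> set_pmf P) \<ge> 1 - measure_pmf.prob P (- D) - measure_pmf.prob P (- T)"
proof -
  have "measure_pmf.prob P (D \<inter> T \<inter> set_pmf P) = 1 - measure_pmf.prob P (- D \<union> - T)"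
  proof -
    have "D \<inter> T = space (measure_pmf P) - (- D \<union> - T)"
      by auto
    then show ?thesis
      by (simp only: measure_Int_set_pmf) (rule measure_pmf.prob_compl, simp)
  qed
  moreover have "measure_pmf.prob P (- D \<union> - T) \<le> measure_pmf.prob P (- D) + measure_pmf.prob P (- T)"
    by (rule measure_Un_le) auto
  ultimately show ?thesis
    by simp
qed

lemma ent_le_of_encryption:
  fixes P :: "'x pmf" and \<pi> :: "'k pmf" and g :: "'k \<Rightarrow> 'x \<Rightarrow> 'c" and n :: nat
  assumes fin: "finite (set_pmf P)" "finite (set_pmf \<pi>)" and "n > 0"
    and A: "A \<subseteq> set_pmf P" and b: "0 < b" "b \<le> measure_pmf.prob P A"
    and inj: "\<And>k. k \<in> set_pmf \<pi> \<Longrightarrow> inj_on (g k) A"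
    and typical: "\<And>x. x \<in> A \<Longrightarrow> real n * (H - \<gamma>) \<le> log 2 (1 / pmf P x)"
    and ent_le: "\<And>x. x \<in> A \<Longrightarrow> ent (map_pmf (\<lambda>k. g k x) \<pi>) \<le> B"
    and mi: "mutual_info (encryption_pmf \<pi> P g) \<le> \<delta>" and "0 \<le> \<delta>"
  shows "H \<le> B / real n + \<gamma> + 1 / real n * (\<delta> / b + log 2 (1 / b))"
proof -
  define a where "a = measure_pmf.prob P A"
  have fA: "finite A"
    using A fin finite_subset by auto
  have a_sum: "a = (\<Sum>x\<in>A. pmf P x)"
    unfolding a_def using fA by (simp add: measure_measure_pmf_finite)
  have "a > 0"
    using b unfolding a_def by linarith
  then have "A \<noteq> {}"
    using a_sum by auto
  have "a * (real n * (H - \<gamma>)) \<le> (\<Sum>x\<in>A. pmf P x * log 2 (1 / pmf P x))"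
    unfolding a_sum sum_distrib_right using typical by (intro sum_mono mult_left_mono) auto
  also have "\<dots> \<le> a * log 2 (1 / a) + mutual_info (encryption_pmf \<pi> P g) + a * B"
    unfolding a_def using fin A \<open>A \<noteq> {}\<close> inj ent_le by (rule partial_entropy_le_mutual_info)
  also have "\<dots> \<le> a * (log 2 (1 / b) + \<delta> / b + B)"
  proof -
    have "log 2 (1 / a) \<le> log 2 (1 / b)"
      using b unfolding a_def by (rule log_inverse_antimono)
    then have "a * log 2 (1 / a) \<le> a * log 2 (1 / b)"
      using \<open>a > 0\<close> by simp
    moreover have "\<delta> \<le> a * (\<delta> / b)"
      using b mult_left_mono[OF b(2) \<open>0 \<le> \<delta>\<close>] unfolding a_def by (simp add: field_simps)
    ultimately show ?thesis
      using mi by (simp add: distrib_left)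
  qed
  finally have "real n * (H - \<gamma>) \<le> log 2 (1 / b) + \<delta> / b + B"
    using \<open>a > 0\<close> by simp
  then have "H - \<gamma> \<le> (log 2 (1 / b) + \<delta> / b + B) / real n"
    using \<open>n > 0\<close> by (simp add: le_divide_eq mult.commute)
  also have "\<dots> = B / real n + 1 / real n * (\<delta> / b + log 2 (1 / b))"
    by (simp add: add_divide_distrib)
  finally show ?thesis
    by simp
qed

lemma inj_on_dec_set:
  assumes "is_system n \<Phi>1 \<Phi>2 \<Psi> C1 C2 \<phi>1 \<phi>2 \<psi> M1 M2"
    and "length k1 = n" and "length k2 = n"
  shows "inj_on (\<lambda>(x1, x2). (\<Phi>1 k1 x1, \<Phi>2 k2 x2)) (dec_set n \<phi>1 \<phi>2 \<psi>)"
proof (rule inj_onI)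
  fix x y
  assume x: "x \<in> dec_set n \<phi>1 \<phi>2 \<psi>" and y: "y \<in> dec_set n \<phi>1 \<phi>2 \<psi>"
    and eq: "(\<lambda>(x1, x2). (\<Phi>1 k1 x1, \<Phi>2 k2 x2)) x = (\<lambda>(x1, x2). (\<Phi>1 k1 x1, \<Phi>2 k2 x2)) y"
  have decode: "z = \<Psi> k1 k2 (\<Phi>1 k1 (fst z)) (\<Phi>2 k2 (snd z))" if "z \<in> dec_set n \<phi>1 \<phi>2 \<psi>" for z
    using assms that unfolding is_system_def dec_set_def by auto
  show "x = y"
    using decode[OF x] decode[OF y] eq by (simp add: case_prod_unfold)
qed

lemma ent_ciphertext_le:
  fixes pK :: "('a \<times> 'b) pmf"
  assumes fin: "finite (set_pmf pK)"
    and sys: "is_system n \<Phi>1 \<Phi>2 \<Psi> C1 C2 \<phi>1 \<phi>2 \<psi> M1 M2"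
    and "length x1 = n" and "length x2 = n"
  defines "W \<equiv> map_pmf (\<lambda>(k1, k2). (\<Phi>1 k1 x1, \<Phi>2 k2 x2)) (block_pmf n pK)"
  shows "ent W \<le> log 2 (card C2) + real n * ent (map_pmf fst pK)"
    and "ent W \<le> log 2 (card C1) + real n * ent (map_pmf snd pK)"
proof -
  have fin_block: "finite (set_pmf (block_pmf n pK))"
    using fin by (rule finite_set_pmf_block_pmf)
  have W_sub: "set_pmf W \<subseteq> C1 \<times> C2"
    using sys assms(3,4) unfolding W_def is_system_def
    by (auto dest!: length_in_set_pmf_block_pmf)
  then have "C1 \<noteq> {}" and "C2 \<noteq> {}" and "finite C1" and "finite C2"
    using set_pmf_not_empty[of W] sys unfolding is_system_def by auto
  then have card_pos: "card C1 > 0" "card C2 > 0"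
    by auto
  have "ent W \<le> log 2 (card C2) + ent (map_pmf fst W)"
  proof (rule ent_le_log_card_fibre_plus_ent[OF _ W_sub _ card_pos(2)])
    show "card {c \<in> C1 \<times> C2. fst c = e} \<le> card C2" for e
    proof -
      have "card {c \<in> C1 \<times> C2. fst c = e} \<le> card ({e} \<times> C2)"
        using \<open>finite C2\<close> by (intro card_mono) auto
      then show ?thesis
        by (simp add: card_cartesian_product_singleton)
    qed
  qed (use \<open>finite C1\<close> \<open>finite C2\<close> in simp)
  also have "ent (map_pmf fst W) \<le> ent (map_pmf fst (block_pmf n pK))"
    unfolding W_def map_pmf_comp using fin_block by (intro ent_map_pmf_le) auto
  finally show "ent W \<le> log 2 (card C2) + real n * ent (map_pmf fst pK)"
    using fin by (simp add: map_fst_block_pmf ent_iid_pmf)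
  have "ent W \<le> log 2 (card C1) + ent (map_pmf snd W)"
  proof (rule ent_le_log_card_fibre_plus_ent[OF _ W_sub _ card_pos(1)])
    show "card {c \<in> C1 \<times> C2. snd c = e} \<le> card C1" for e
    proof -
      have "card {c \<in> C1 \<times> C2. snd c = e} \<le> card (C1 \<times> {e})"
        using \<open>finite C1\<close> by (intro card_mono) auto
      then show ?thesis
        by (simp add: card_cartesian_product)
    qed
  qed (use \<open>finite C1\<close> \<open>finite C2\<close> in simp)
  also have "ent (map_pmf snd W) \<le> ent (map_pmf snd (block_pmf n pK))"
    unfolding W_def map_pmf_comp using fin_block by (intro ent_map_pmf_le) auto
  finally show "ent W \<le> log 2 (card C1) + real n * ent (map_pmf snd pK)"
    using fin by (simp add: map_snd_block_pmf ent_iid_pmf)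
qed

lemma ent_le_rate_plus_ent_key:
  fixes pX pK :: "('a \<times> 'b) pmf"
  assumes fin: "finite (set_pmf pX)" "finite (set_pmf pK)" and "n > 0"
    and sys: "is_system n \<Phi>1 \<Phi>2 \<Psi> C1 C2 \<phi>1 \<phi>2 \<psi> M1 M2"
    and err: "measure_pmf.prob (block_pmf n pX) (- dec_set n \<phi>1 \<phi>2 \<psi>) \<le> \<epsilon>"
    and mi: "mutual_info (cipher_source_pmf n pX pK \<Phi>1 \<Phi>2) \<le> \<delta>" and "0 \<le> \<delta>"
    and nu: "nu_eps pX n \<gamma> \<epsilon> < 1"
  shows "ent pX \<le> log 2 (card C2) / real n + ent (map_pmf fst pK) + \<gamma> + zeta pX n \<gamma> \<epsilon> \<delta>"
    and "ent pX \<le> log 2 (card C1) / real n + ent (map_pmf snd pK) + \<gamma> + zeta pX n \<gamma> \<epsilon> \<delta>"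
proof -
  define P where "P = block_pmf n pX"
  define \<pi> where "\<pi> = block_pmf n pK"
  define g :: "'a list \<times> 'b list \<Rightarrow> 'a list \<times> 'b list \<Rightarrow> nat \<times> nat"
    where "g = (\<lambda>(k1, k2) (x1, x2). (\<Phi>1 k1 x1, \<Phi>2 k2 x2))"
  define A where "A = dec_set n \<phi>1 \<phi>2 \<psi> \<inter> typ_set pX n \<gamma> \<inter> set_pmf P"
  define b where "b = 1 - nu_eps pX n \<gamma> \<epsilon>"
  have fin_block: "finite (set_pmf P)" "finite (set_pmf \<pi>)"
    unfolding P_def \<pi>_def using fin by (auto intro: finite_set_pmf_block_pmf)
  have A_sub: "A \<subseteq> set_pmf P"
    unfolding A_def by auto
  have b: "0 < b" "b \<le> measure_pmf.prob P A"
    using nu err measure_pmf_Int_set_pmf_ge[of P "dec_set n \<phi>1 \<phi>2 \<psi>" "typ_set pX n \<gamma>"]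
    unfolding A_def b_def P_def nu_eps_def nu_def by auto
  have inj: "inj_on (g k) A" if "k \<in> set_pmf \<pi>" for k
    using that inj_on_dec_set[OF sys] unfolding g_def A_def \<pi>_def
    by (cases k) (auto dest!: length_in_set_pmf_block_pmf intro: inj_on_subset)
  have typical: "real n * (ent pX - \<gamma>) \<le> log 2 (1 / pmf P x)" if "x \<in> A" for x
    using that \<open>n > 0\<close> unfolding A_def typ_set_def P_def
    by (auto simp: pmf_block_pmf field_simps)
  have ent_le: "ent (map_pmf (\<lambda>k. g k x) \<pi>) \<le> log 2 (card C2) + real n * ent (map_pmf fst pK)"
    "ent (map_pmf (\<lambda>k. g k x) \<pi>) \<le> log 2 (card C1) + real n * ent (map_pmf snd pK)"
    if "x \<in> A" for x
  proof -
    have "length (fst x) = n" "length (snd x) = n"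
      using that length_in_set_pmf_block_pmf[of "fst x" "snd x" n pX] unfolding A_def P_def by auto
    then show "ent (map_pmf (\<lambda>k. g k x) \<pi>) \<le> log 2 (card C2) + real n * ent (map_pmf fst pK)"
      "ent (map_pmf (\<lambda>k. g k x) \<pi>) \<le> log 2 (card C1) + real n * ent (map_pmf snd pK)"
      using ent_ciphertext_le[OF fin(2) sys] unfolding \<pi>_def g_def by (simp_all add: case_prod_unfold)
  qed
  have mi': "mutual_info (encryption_pmf \<pi> P g) \<le> \<delta>"
    using mi unfolding cipher_source_pmf_def encryption_pmf_def \<pi>_def P_def g_def
    by (simp add: case_prod_unfold)
  have zeta: "zeta pX n \<gamma> \<epsilon> \<delta> = 1 / real n * (\<delta> / b + log 2 (1 / b))"
    unfolding zeta_def b_def ..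
  show "ent pX \<le> log 2 (card C2) / real n + ent (map_pmf fst pK) + \<gamma> + zeta pX n \<gamma> \<epsilon> \<delta>"
    using ent_le_of_encryption[OF fin_block \<open>n > 0\<close> A_sub b inj typical ent_le(1) mi' \<open>0 \<le> \<delta>\<close>]
      \<open>n > 0\<close> unfolding zeta by (simp add: add_divide_distrib)
  show "ent pX \<le> log 2 (card C1) / real n + ent (map_pmf snd pK) + \<gamma> + zeta pX n \<gamma> \<epsilon> \<delta>"
    using ent_le_of_encryption[OF fin_block \<open>n > 0\<close> A_sub b inj typical ent_le(2) mi' \<open>0 \<le> \<delta>\<close>]
      \<open>n > 0\<close> unfolding zeta by (simp add: add_divide_distrib)
qed

lemma eventually_ent_le_rate_plus_ent_key:
  fixes pX pK :: "('a::{finite,field} \<times> 'b::{finite,field}) pmf"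
  assumes "(R1, R2) \<in> R_star \<epsilon> \<delta> pX pK" and "\<epsilon> < 1" and "0 \<le> \<delta>" and "\<gamma> > 0"
  shows "\<forall>\<^sub>F n in sequentially.
    ent pX \<le> R2 + ent (map_pmf fst pK) + 2 * \<gamma> + zeta pX n \<gamma> \<epsilon> \<delta> \<and>
    ent pX \<le> R1 + ent (map_pmf snd pK) + 2 * \<gamma> + zeta pX n \<gamma> \<epsilon> \<delta>"
proof -
  obtain \<Phi>1 \<Phi>2 \<Psi> C1 C2 \<phi>1 \<phi>2 \<psi> M1 M2 n0 where
    sys: "\<And>n. n \<ge> 1 \<Longrightarrow> is_system n (\<Phi>1 n) (\<Phi>2 n) (\<Psi> n) (C1 n) (C2 n) (\<phi>1 n) (\<phi>2 n) (\<psi> n) (M1 n) (M2 n)"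
    and good: "\<And>n. n \<ge> n0 \<Longrightarrow> n \<ge> 1 \<Longrightarrow>
      1 / real n * log 2 (real (card (C1 n))) \<le> R1 + \<gamma> \<and>
      1 / real n * log 2 (real (card (C2 n))) \<le> R2 + \<gamma> \<and>
      measure_pmf.prob (block_pmf n pX) (- dec_set n (\<phi>1 n) (\<phi>2 n) (\<psi> n)) \<le> \<epsilon> \<and>
      mutual_info (cipher_source_pmf n pX pK (\<Phi>1 n) (\<Phi>2 n)) \<le> \<delta>"
    using assms(1,4) unfolding R_star_def by auto metis
  have fin: "finite (set_pmf pX)" "finite (set_pmf pK)"
    by (auto intro: finite_subset[OF subset_UNIV])
  have "\<forall>\<^sub>F n in sequentially. nu pX n \<gamma> < 1 - \<epsilon>"
    using nu_tendsto_zero[OF fin(1) \<open>\<gamma> > 0\<close>] assms(2) by (intro order_tendstoD) auto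
  then show ?thesis
    using eventually_ge_at_top[of "max n0 1"]
  proof eventually_elim
    case (elim n)
    then have rates: "log 2 (card (C1 n)) / real n \<le> R1 + \<gamma>" "log 2 (card (C2 n)) / real n \<le> R2 + \<gamma>"
      and err: "measure_pmf.prob (block_pmf n pX) (- dec_set n (\<phi>1 n) (\<phi>2 n) (\<psi> n)) \<le> \<epsilon>"
      and mi: "mutual_info (cipher_source_pmf n pX pK (\<Phi>1 n) (\<Phi>2 n)) \<le> \<delta>"
      using good[of n] by auto
    have "nu_eps pX n \<gamma> \<epsilon> < 1"
      using elim unfolding nu_eps_def by simp
    then show ?case
      using ent_le_rate_plus_ent_key[OF fin _ sys err mi \<open>0 \<le> \<delta>\<close>] rates elim by fastforce
  qed
qed

theorem proposition2:
  fixes pX pK :: "('a::{finite,field} \<times> 'b::{finite,field}) pmf"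
    and \<delta>0 \<epsilon> \<delta> R1 R2 :: real
  assumes "\<delta>0 > 0"
    and "0 < \<epsilon>" and "\<epsilon> < 1"
    and "0 < \<delta>" and "\<delta> \<le> \<delta>0"
    and "(R1, R2) \<in> S_star \<epsilon> \<delta> pX pK"
  shows "\<forall>\<gamma>>0. \<exists>n0. \<forall>n\<ge>n0.
           R1 \<le> ent (map_pmf fst pK) + 2 * \<gamma> + zeta pX n \<gamma> \<epsilon> \<delta> \<and>
           R2 \<le> ent (map_pmf snd pK) + 2 * \<gamma> + zeta pX n \<gamma> \<epsilon> \<delta>"
proof (intro allI impI)
  fix \<gamma> :: real
  assume "\<gamma> > 0"
  have R: "(R1, R2) \<in> R_star \<epsilon> \<delta> pX pK" and sum_rates: "R1 + R2 = ent pX"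
    using assms(6) unfolding S_star_def by auto
  have "\<forall>\<^sub>F n in sequentially.
      R1 \<le> ent (map_pmf fst pK) + 2 * \<gamma> + zeta pX n \<gamma> \<epsilon> \<delta> \<and>
      R2 \<le> ent (map_pmf snd pK) + 2 * \<gamma> + zeta pX n \<gamma> \<epsilon> \<delta>"
    using eventually_ent_le_rate_plus_ent_key[OF R assms(3) _ \<open>\<gamma> > 0\<close>] assms(4) sum_rates
    by (auto elim!: eventually_mono)
  then show "\<exists>n0. \<forall>n\<ge>n0.
      R1 \<le> ent (map_pmf fst pK) + 2 * \<gamma> + zeta pX n \<gamma> \<epsilon> \<delta> \<and>
      R2 \<le> ent (map_pmf snd pK) + 2 * \<gamma> + zeta pX n \<gamma> \<epsilon> \<delta>"
    unfolding eventually_sequentially .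
qed

end
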